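(* Suppose that $\mathcal G$ is a space group and $\mathcal R\subset\mathcal G$ has Property 2. Then $\ker(\|\cdot\|_{\mathcal R})=U_{\mathrm{trans}}$.
   Context: Euclidean group: $\mathrm E(n)$ consists of pairs $(A|b)$, $A\in\mathrm O(n)$, $b\in\mathbb R^n$, acting by $(A|b)\cdot x=Ax+b$, product $(A_1|b_1)(A_2|b_2)=(A_1A_2|b_1+A_1b_2)$; $\mathrm{rot}(A|b)=A$. A space group in $\mathrm E(n)$ is a discrete subgroup (all orbits discrete) containing $n$ translations $(I|b)$ with linearly independent $b$'s. Standing setting: $d=d_1+d_2$; $\mathcal S<\mathrm E(d_2)$ is a space group with translation subgroup $\mathcal T_{\mathcal S}$; $A\oplus(B|b)=(\mathrm{diag}(A,B)|(0,b))$; $\mathcal G$ is a discrete subgroup of $\mathrm E(d)$ contained in $\{A\oplus s:A\in\mathrm O(d_1),s\in\mathcal S\}$ projecting onto $\mathcal S$; $\mathcal T\subset\mathcal G$ maps bijectively onto $\mathcal T_{\mathcal S}$. There is $m_0\in\mathbb N$ such that $\mathcal T^N=\{t^N:t\in\mathcal T\}$ is a normal subgroup iff $N\in\mathcal M=m_0\mathbb N$, then isomorphic to $\mathbb Z^{d_2}$ of finite index; $\mathcal C_N$ is a fixed set of representatives of $\mathcal G/\mathcal T^N$. $U_{\mathrm{per}}$: maps $u:\mathcal G\to\mathbb R^d$ that are $\mathcal T^N$-periodic for some $N\in\mathcal M$. $x_0\in\mathbb R^d$ with $g\mapsto g\cdot x_0$ injective; $d_{\mathrm{aff}}=\dim\mathrm{aff}(\mathcal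 G\cdot x_0)$; assumed $\mathcal G\cdot x_0\subset\{0_{d-d_{\mathrm{aff}}}\}\times\mathbb R^{d_{\mathrm{aff}}}$ and $\mathcal G$ acts trivially on $\mathbb R^{d-d_{\mathrm{aff}}}\times\{0\}$. $U_{\mathrm{iso}}(\mathcal R)$: maps $v:\mathcal R\to\mathbb R^d$ with $a\in\mathbb R^d$, $S\in\mathrm{Skew}(d)$ such that $\mathrm{rot}(g)v(g)=a+S(g\cdot x_0-x_0)$ on $\mathcal R$. For finite $\mathcal R$ and $\mathcal T^N$-periodic $u$: $\|u\|_{\mathcal R}=\big(\frac1{|\mathcal C_N|}\sum_{g\in\mathcal C_N}\mathrm{dist}(u(g\,\cdot)|_{\mathcal R},U_{\mathrm{iso}}(\mathcal R))^2\big)^{1/2}$. $U_{\mathrm{trans}}$ is the set of maps $u:\mathcal G\to\mathbb R^d$ such that there is $a\in\mathbb R^d$ with $\mathrm{rot}(g)u(g)=a$ for all $g\in\mathcal G$. Property 1: $\mathcal R$ finite, $\mathrm{id}\in\mathcal R$, $\mathrm{aff}(\mathcal R\cdot x_0)=\mathrm{aff}(\mathcal G\cdot x_0)$. Property 2: $\mathcal R$ finite, and there are $\mathcal R',\mathcal R''$ with $\mathrm{id}\in\mathcal R'$, $\mathcal R'$ generating $\mathcal G$, $\mathcal R''$ with Property 1, and $\{gh:g\in\mathcal R',h\in\mathcal R''\}\subset\mathcal R$. *)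

theory Defs
  imports "HOL-Analysis.Analysis"
begin

text \<open>Elements of the Euclidean group E(d): pairs (A,b), acting by x |-> A x + b.\<close>

type_synonym 'd eucl = "(real^'d^'d) \<times> (real^'d)"

definition Eucl :: "'d::finite eucl set" where
  "Eucl = {(A, b). orthogonal_matrix A}"

definition emul :: "'d::finite eucl \<Rightarrow> 'd eucl \<Rightarrow> 'd eucl" where
  "emul g h = (fst g ** fst h, snd g + fst g *v snd h)"

definition eid :: "'d::finite eucl" where
  "eid = (mat 1, 0)"

definition einv :: "'d::finite eucl \<Rightarrow> 'd eucl" where
  "einv g = (transpose (fst g), - (transpose (fst g) *v snd g))"

definition rot :: "'d::finite eucl \<Rightarrow> real^'d^'d" where
  "rot g = fst g"

definition act :: "'d::finite eucl \<Rightarrow> real^'d \<Rightarrow> real^'d" where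
  "act g x = fst g *v x + snd g"

fun epow :: "'d::finite eucl \<Rightarrow> nat \<Rightarrow> 'd eucl" where
  "epow g 0 = eid"
| "epow g (Suc n) = emul g (epow g n)"

definition esubgroup :: "'d::finite eucl set \<Rightarrow> bool" where
  "esubgroup H \<longleftrightarrow> H \<subseteq> Eucl \<and> eid \<in> H \<and>
     (\<forall>g\<in>H. \<forall>h\<in>H. emul g h \<in> H) \<and> (\<forall>g\<in>H. einv g \<in> H)"

definition enormal :: "'d::finite eucl set \<Rightarrow> 'd eucl set \<Rightarrow> bool" where
  "enormal H G \<longleftrightarrow> esubgroup H \<and> H \<subseteq> G \<and>
     (\<forall>g\<in>G. \<forall>h\<in>H. emul (emul g h) (einv g) \<in> H)"

definition egen :: "'d::finite eucl set \<Rightarrow> 'd eucl set" where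
  "egen R = \<Inter> {H. esubgroup H \<and> R \<subseteq> H}"

definition discrete_set :: "(real^'d) set \<Rightarrow> bool" where
  "discrete_set S \<longleftrightarrow> (\<forall>y\<in>S. \<exists>e>0. \<forall>z\<in>S. dist z y < e \<longrightarrow> z = y)"

definition space_group :: "'d::finite eucl set \<Rightarrow> bool" where
  "space_group G \<longleftrightarrow> esubgroup G \<and> (\<forall>x. discrete_set ((\<lambda>g. act g x) ` G)) \<and>
     (\<exists>B. independent B \<and> card B = CARD('d) \<and> (\<forall>b\<in>B. (mat 1, b) \<in> G))"

definition transl :: "'d::finite eucl set \<Rightarrow> 'd eucl set" where
  "transl G = {g \<in> G. fst g = mat 1}"

definition transl_pow :: "'d::finite eucl set \<Rightarrow> nat \<Rightarrow> 'd eucl set" where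
  "transl_pow G N = (\<lambda>t. epow t N) ` transl G"

definition admissible :: "'d::finite eucl set \<Rightarrow> nat \<Rightarrow> bool" where
  "admissible G N \<longleftrightarrow> N \<ge> 1 \<and> enormal (transl_pow G N) G"

definition periodic :: "'d::finite eucl set \<Rightarrow> nat \<Rightarrow> ('d eucl \<Rightarrow> real^'d) \<Rightarrow> bool" where
  "periodic G N u \<longleftrightarrow> (\<forall>g\<in>G. \<forall>t\<in>transl_pow G N. u (emul g t) = u g)"

definition Uper :: "'d::finite eucl set \<Rightarrow> ('d eucl \<Rightarrow> real^'d) set" where
  "Uper G = {u. \<exists>N. admissible G N \<and> periodic G N u}"

definition reps :: "'d::finite eucl set \<Rightarrow> 'd eucl set \<Rightarrow> 'd eucl set \<Rightarrow> bool" where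
  "reps G H C \<longleftrightarrow> C \<subseteq> G \<and> (\<forall>g\<in>G. \<exists>!c. c \<in> C \<and> emul (einv c) g \<in> H)"

definition skew :: "real^'d^'d \<Rightarrow> bool" where
  "skew S \<longleftrightarrow> transpose S = - S"

definition Uiso :: "real^'d::finite \<Rightarrow> 'd eucl set \<Rightarrow> ('d eucl \<Rightarrow> real^'d) set" where
  "Uiso x0 R = {v. \<exists>a S. skew S \<and>
      (\<forall>g\<in>R. rot g *v v g = a + S *v (act g x0 - x0))}"

definition isodist :: "real^'d::finite \<Rightarrow> 'd eucl set \<Rightarrow> ('d eucl \<Rightarrow> real^'d) \<Rightarrow> real" where
  "isodist x0 R w = Inf {sqrt (\<Sum>h\<in>R. (norm (w h - v h))\<^sup>2) | v. v \<in> Uiso x0 R}"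

definition Rnorm :: "real^'d::finite \<Rightarrow> 'd eucl set \<Rightarrow> 'd eucl set \<Rightarrow> ('d eucl \<Rightarrow> real^'d) \<Rightarrow> real" where
  "Rnorm x0 C R u = sqrt ((1 / real (card C)) *
      (\<Sum>g\<in>C. (isodist x0 R (\<lambda>h. u (emul g h)))\<^sup>2))"

definition Utrans :: "'d::finite eucl set \<Rightarrow> ('d eucl \<Rightarrow> real^'d) set" where
  "Utrans G = {u. \<exists>a. \<forall>g\<in>G. rot g *v u g = a}"

definition property1 :: "real^'d::finite \<Rightarrow> 'd eucl set \<Rightarrow> 'd eucl set \<Rightarrow> bool" where
  "property1 x0 G R \<longleftrightarrow> finite R \<and> eid \<in> R \<and>
     affine hull ((\<lambda>g. act g x0) ` R) = affine hull ((\<lambda>g. act g x0) ` G)"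

definition property2 :: "real^'d::finite \<Rightarrow> 'd eucl set \<Rightarrow> 'd eucl set \<Rightarrow> bool" where
  "property2 x0 G R \<longleftrightarrow> finite R \<and>
     (\<exists>R' R''. R' \<subseteq> G \<and> R'' \<subseteq> G \<and> eid \<in> R' \<and> egen R' = G \<and> property1 x0 G R'' \<and>
        {emul g h | g h. g \<in> R' \<and> h \<in> R''} \<subseteq> R)"

end

theory Submission
  imports Defs
begin

text \<open>If the seminorm vanishes on a periodic u, then the least-squares distance of every
  translate u(g \<cdot>) to the finite-dimensional space U_iso(R) is zero and hence attained:
  periodicity reduces an arbitrary g to one of the finitely many representatives in C_N (finite
  because the lattice is discrete and the point group finite). In global coordinates this says
  that rot k u(k) = b + T (k x0) on each translate g R, with (b, T) depending on g. By
  Property 2 the translates g R and g r R (r a generator) overlap in g r R'', whose orbit has full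
  affine hull, so (b, T) is invariant under the generators and hence constant on G. Periodicity
  under the lattice translations in T^N then forces T = 0, i.e. u is a translation field.\<close>

section \<open>The Euclidean group\<close>

lemma Eucl_iff_orthogonal_rot: "g \<in> Eucl \<longleftrightarrow> orthogonal_matrix (rot g)"
  by (cases g) (simp add: Eucl_def rot_def)

lemma orthogonal_matrix_transpose_mult_cancel:
  "orthogonal_matrix (A::real^'n^'n) \<Longrightarrow> transpose A *v (A *v x) = x"
  by (simp add: matrix_vector_mul_assoc orthogonal_matrix_def del: transpose_matrix_vector)

lemma orthogonal_matrix_mult_transpose_cancel:
  "orthogonal_matrix (A::real^'n^'n) \<Longrightarrow> A *v (transpose A *v x) = x"
  by (simp add: matrix_vector_mul_assoc orthogonal_matrix_def del: transpose_matrix_vector)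

lemma matrix_vector_mult_uminus_right [simp]: "(A::real^'n^'m) *v (- x) = - (A *v x)"
  using linear_neg[OF matrix_vector_mul_linear] by blast

lemma norm_orthogonal_matrix_mult: "orthogonal_matrix (A::real^'n^'n) \<Longrightarrow> norm (A *v x) = norm x"
  by (metis matrix_of_matrix_vector_mul matrix_vector_mul_linear orthogonal_transformation_matrix
      orthogonal_transformation_norm)

lemma matrix_eq_on_spanning_set:
  fixes A C :: "real^'n^'m"
  assumes "span B = UNIV" "\<And>b. b \<in> B \<Longrightarrow> A *v b = C *v b"
  shows "A = C"
proof -
  have "A *v x = C *v x" for x
    using real_vector.linear_eq_on[of "(*v) A" "(*v) C" x B] assms by (auto simp: linear_def[symmetric])
  then show ?thesis
    by (simp add: matrix_eq)
qed

lemma transpose_zero: "transpose (0 :: real^'n^'m) = 0"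
  and transpose_add: "transpose (A + B) = transpose A + (transpose B :: real^'n^'m)"
  and transpose_diff: "transpose (A - B) = transpose A - (transpose B :: real^'n^'m)"
  by (simp_all add: transpose_def vec_eq_iff)

lemma emul_assoc: "emul (emul a b) c = emul a (emul b c)"
  by (simp add: emul_def matrix_mul_assoc matrix_vector_mul_assoc matrix_vector_right_distrib add.assoc)

lemma emul_eid_left [simp]: "emul eid g = g"
  and emul_eid_right [simp]: "emul g eid = g"
  by (simp_all add: emul_def eid_def)

lemma einv_left: "g \<in> Eucl \<Longrightarrow> emul (einv g) g = eid"
  by (cases g) (simp add: emul_def einv_def eid_def Eucl_def orthogonal_matrix_def
      matrix_vector_mul_assoc del: transpose_matrix_vector)

lemma einv_right: "g \<in> Eucl \<Longrightarrow> emul g (einv g) = eid"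
  by (cases g) (simp add: emul_def einv_def eid_def Eucl_def orthogonal_matrix_def
      matrix_vector_mul_assoc del: transpose_matrix_vector)

lemma einv_einv: "g \<in> Eucl \<Longrightarrow> einv (einv g) = g"
  by (cases g) (simp add: einv_def Eucl_def orthogonal_matrix_def matrix_vector_mul_assoc
      del: transpose_matrix_vector)

lemma einv_emul: "a \<in> Eucl \<Longrightarrow> einv (emul a b) = emul (einv b) (einv a)"
  by (cases a, cases b) (simp add: matrix_mul_assoc[symmetric] emul_def einv_def Eucl_def
      matrix_transpose_mul matrix_vector_mul_assoc matrix_vector_right_distrib orthogonal_matrix_def
      del: transpose_matrix_vector)

lemma einv_Eucl: "g \<in> Eucl \<Longrightarrow> einv g \<in> Eucl"
  by (cases g) (simp add: einv_def Eucl_def)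

lemma rot_emul: "rot (emul g h) = rot g ** rot h"
  by (simp add: rot_def emul_def)

lemma act_emul: "act (emul g h) x = act g (act h x)"
  by (simp add: act_def emul_def matrix_vector_mul_assoc matrix_vector_right_distrib add.assoc)

lemma rot_eid [simp]: "rot eid = mat 1"
  by (simp add: rot_def eid_def)

lemma act_eid [simp]: "act eid x = x"
  by (simp add: act_def eid_def)

lemma surj_act:
  assumes "g \<in> Eucl"
  shows "surj (act g)"
proof (rule surjI)
  fix z
  have "rot g *v (transpose (rot g) *v (z - snd g)) = z - snd g"
    using assms Eucl_iff_orthogonal_rot orthogonal_matrix_mult_transpose_cancel by blast
  then show "act g (transpose (rot g) *v (z - snd g)) = z"
    by (simp add: act_def rot_def del: transpose_matrix_vector)
qed

lemma emul_translations: "emul (mat 1, a) (mat 1, b) = (mat 1, a + b)"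
  by (simp add: emul_def)

lemma einv_translation: "einv (mat 1, a) = (mat 1, - a)"
  by (simp add: einv_def)

lemma epow_translation: "epow (mat 1, b) N = (mat 1, of_nat N *\<^sub>R b)"
  by (induction N) (simp_all add: eid_def emul_def algebra_simps)

lemma conjugate_translation:
  "g \<in> Eucl \<Longrightarrow> emul (emul g (mat 1, b)) (einv g) = (mat 1, rot g *v b)"
  by (cases g) (simp add: emul_def einv_def rot_def Eucl_def orthogonal_matrix_def
      matrix_vector_mul_assoc del: transpose_matrix_vector)

lemma esubgroup_emul: "esubgroup G \<Longrightarrow> g \<in> G \<Longrightarrow> h \<in> G \<Longrightarrow> emul g h \<in> G"
  and esubgroup_einv: "esubgroup G \<Longrightarrow> g \<in> G \<Longrightarrow> einv g \<in> G"
  and esubgroup_eid: "esubgroup G \<Longrightarrow> eid \<in> G"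
  and esubgroup_Eucl: "esubgroup G \<Longrightarrow> g \<in> G \<Longrightarrow> g \<in> Eucl"
  by (auto simp: esubgroup_def)

lemma esubgroup_orthogonal_rot: "esubgroup G \<Longrightarrow> g \<in> G \<Longrightarrow> orthogonal_matrix (rot g)"
  using esubgroup_Eucl Eucl_iff_orthogonal_rot by blast

lemma generators_subset_egen: "R \<subseteq> egen R"
  by (auto simp: egen_def)

text \<open>The elements under which f is right invariant form a subgroup containing the generators.\<close>
lemma right_invariant_on_generators_imp_const:
  assumes sg: "esubgroup G" and gen: "egen R = G"
    and inv: "\<And>g r. g \<in> G \<Longrightarrow> r \<in> R \<Longrightarrow> f (emul g r) = f g"
    and g: "g \<in> G"
  shows "f g = f eid"
proof -
  define K where "K = {k \<in> G. \<forall>x\<in>G. f (emul x k) = f x}"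
  have "esubgroup K"
    unfolding esubgroup_def
  proof (intro conjI ballI)
    show "K \<subseteq> Eucl" "eid \<in> K"
      using sg by (auto simp: K_def esubgroup_Eucl esubgroup_eid)
  next
    fix k1 k2 assume "k1 \<in> K" "k2 \<in> K"
    then show "emul k1 k2 \<in> K"
      using sg by (simp add: K_def esubgroup_emul emul_assoc[symmetric])
  next
    fix k assume k: "k \<in> K"
    then have kG: "k \<in> G" by (simp add: K_def)
    have "f (emul x (einv k)) = f x" if x: "x \<in> G" for x
      using k x kG sg einv_left[OF esubgroup_Eucl[OF sg kG]]
      by (auto simp: K_def emul_assoc esubgroup_emul esubgroup_einv elim!: ballE[of _ _ "emul x (einv k)"])
    then show "einv k \<in> K"
      using kG sg by (simp add: K_def esubgroup_einv)
  qed
  moreover have "R \<subseteq> K"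
    using generators_subset_egen[of R] gen inv by (auto simp: K_def)
  ultimately have "G \<subseteq> K"
    using gen by (auto simp: egen_def)
  then show ?thesis
    using g sg by (auto simp: K_def esubgroup_eid elim!: ballE[of _ _ eid])
qed

section \<open>The translation lattice\<close>

definition lattice :: "'d::finite eucl set \<Rightarrow> (real^'d) set" where
  "lattice G = {b. (mat 1, b) \<in> G}"

lemma lattice_0: "esubgroup G \<Longrightarrow> 0 \<in> lattice G"
  using esubgroup_eid by (force simp: lattice_def eid_def)

lemma lattice_add: "esubgroup G \<Longrightarrow> a \<in> lattice G \<Longrightarrow> b \<in> lattice G \<Longrightarrow> a + b \<in> lattice G"
  using esubgroup_emul[of G "(mat 1, a)" "(mat 1, b)"] by (simp add: lattice_def emul_translations)

lemma lattice_uminus: "esubgroup G \<Longrightarrow> a \<in> lattice G \<Longrightarrow> - a \<in> lattice G"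
  using esubgroup_einv[of G "(mat 1, a)"] by (simp add: lattice_def einv_translation)

lemma lattice_diff: "esubgroup G \<Longrightarrow> a \<in> lattice G \<Longrightarrow> b \<in> lattice G \<Longrightarrow> a - b \<in> lattice G"
  using lattice_add lattice_uminus by (metis diff_conv_add_uminus)

lemma lattice_int_scaleR:
  assumes sg: "esubgroup G" and a: "a \<in> lattice G"
  shows "of_int k *\<^sub>R a \<in> lattice G"
proof -
  have nat: "of_nat n *\<^sub>R a \<in> lattice G" for n
  proof (induction n)
    case (Suc n)
    then show ?case
      using lattice_add[OF sg a Suc.IH] by (simp add: algebra_simps)
  qed (simp add: lattice_0[OF sg])
  show ?thesis
  proof (cases "k \<ge> 0")
    case True
    then show ?thesis
      using nat[of "nat k"] by simp
  next
    case False
    then show ?thesis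
      using lattice_uminus[OF sg nat[of "nat (- k)"]] by simp
  qed
qed

lemma lattice_int_combination:
  assumes "esubgroup G" "finite B" "B \<subseteq> lattice G"
  shows "(\<Sum>b\<in>B. of_int (k b) *\<^sub>R b) \<in> lattice G"
  using assms(2,3)
  by (induction B rule: finite_induct) (auto simp: lattice_0[OF assms(1)] lattice_add[OF assms(1)]
      lattice_int_scaleR[OF assms(1)])

lemma transl_pow_eq: "transl_pow G N = {(mat 1, of_nat N *\<^sub>R b) | b. b \<in> lattice G}"
  unfolding transl_pow_def transl_def lattice_def
  by (force simp: epow_translation intro: image_eqI)

lemma transl_pow_subset: "esubgroup G \<Longrightarrow> transl_pow G N \<subseteq> G"
  using lattice_int_scaleR[of G _ "int N"] by (auto simp: transl_pow_eq lattice_def)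

lemma rot_mult_lattice:
  assumes sg: "esubgroup G" and g: "g \<in> G" and b: "b \<in> lattice G"
  shows "rot g *v b \<in> lattice G"
proof -
  have "emul (emul g (mat 1, b)) (einv g) \<in> G"
    using sg g b by (simp add: lattice_def esubgroup_emul esubgroup_einv)
  then show ?thesis
    by (simp add: lattice_def conjugate_translation[OF esubgroup_Eucl[OF sg g]])
qed

lemma admissible_1:
  assumes sg: "esubgroup G"
  shows "admissible G 1"
proof -
  have "transl_pow G 1 = transl G"
    by (simp add: transl_pow_def eid_def emul_def)
  moreover have "transl G = {(mat 1, b) | b. b \<in> lattice G}"
    by (auto simp: transl_def lattice_def)
  moreover have "esubgroup {(mat 1, b) | b. b \<in> lattice G}"
    using sg lattice_0[OF sg] lattice_add[OF sg] lattice_uminus[OF sg]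
    unfolding esubgroup_def
    by (auto simp: Eucl_def orthogonal_matrix_id eid_def emul_translations einv_translation)
  moreover have "emul (emul g (mat 1, b)) (einv g) \<in> {(mat 1, b) | b. b \<in> lattice G}"
    if "g \<in> G" "b \<in> lattice G" for g b
    using conjugate_translation[OF esubgroup_Eucl[OF sg that(1)]] rot_mult_lattice[OF sg that]
    by simp
  ultimately show ?thesis
    by (auto simp: admissible_def enormal_def lattice_def)
qed

lemma space_group_lattice_basis:
  fixes G :: "'d::finite eucl set"
  assumes "space_group G"
  obtains B where "finite B" "span B = UNIV" "B \<subseteq> lattice G"
proof -
  obtain B where B: "independent B" "card B = CARD('d)" "B \<subseteq> lattice G"
    using assms unfolding space_group_def lattice_def by blast
  then have "finite B"
    using card_ge_0_finite[of B] by simp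
  moreover have "span B = UNIV"
    using card_ge_dim_independent[of B UNIV] B by auto
  ultimately show ?thesis
    using that B(3) by blast
qed

lemma space_group_finite_lattice_cball:
  assumes "space_group G"
  shows "finite (lattice G \<inter> cball 0 r)"
proof -
  have sg: "esubgroup G" and ds: "discrete_set ((\<lambda>g. act g 0) ` G)"
    using assms by (simp_all add: space_group_def)
  obtain e where e: "e > 0" "\<forall>z\<in>(\<lambda>g. act g 0) ` G. dist z 0 < e \<longrightarrow> z = 0"
    using ds esubgroup_eid[OF sg] unfolding discrete_set_def by fastforce
  have "x = y" if "x \<in> lattice G" "y \<in> lattice G" "dist x y < e" for x y
  proof -
    have "x - y \<in> (\<lambda>g. act g 0) ` G"
      using lattice_diff[OF sg that(1,2)] unfolding lattice_def by (force simp: act_def)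
    then show ?thesis
      using e that(3) by (auto simp: dist_norm)
  qed
  then have "uniform_discrete (lattice G \<inter> cball 0 r)"
    unfolding uniform_discrete_def using e(1) by blast
  then show ?thesis
    using uniform_discrete_finite_iff by blast
qed

text \<open>The point group acts by isometries on the lattice, so each rotation is determined by
  the images of a lattice basis, which range over finitely many lattice points.\<close>
lemma space_group_finite_point_group:
  fixes G :: "'d::finite eucl set"
  assumes sgr: "space_group G"
  shows "finite (rot ` G)"
proof -
  have sg: "esubgroup G"
    using sgr by (simp add: space_group_def)
  obtain B where B: "finite B" "span B = UNIV" "B \<subseteq> lattice G"
    using space_group_lattice_basis[OF sgr] by blast
  define images where "images A = restrict (\<lambda>b. A *v b) B" for A :: "real^'d^'d"
  have "images ` rot ` G \<subseteq> PiE B (\<lambda>b. lattice G \<inter> cball 0 (norm b))"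
    using B(3) rot_mult_lattice[OF sg] esubgroup_orthogonal_rot[OF sg]
    by (auto simp: images_def norm_orthogonal_matrix_mult)
  moreover have "finite (PiE B (\<lambda>b. lattice G \<inter> cball 0 (norm b)))"
    using B(1) space_group_finite_lattice_cball[OF sgr] by (simp add: finite_PiE)
  moreover have "inj_on images (rot ` G)"
  proof
    fix A1 A2 assume "images A1 = images A2"
    then have "\<And>b. b \<in> B \<Longrightarrow> A1 *v b = A2 *v b"
      unfolding images_def by (metis restrict_apply')
    then show "A1 = A2"
      using matrix_eq_on_spanning_set[OF B(2)] by blast
  qed
  ultimately show ?thesis
    using finite_subset finite_imageD by metis
qed

lemma lattice_mod_multiple:
  assumes sg: "esubgroup G" and B: "finite B" "span B = UNIV" "B \<subseteq> lattice G"
    and N: "N \<ge> 1" and l: "l \<in> lattice G"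
  obtains m where "m \<in> lattice G"
    "l - of_nat N *\<^sub>R m \<in> lattice G \<inter> cball 0 (of_nat N * (\<Sum>b\<in>B. norm b))"
proof -
  obtain c where c: "l = (\<Sum>b\<in>B. c b *\<^sub>R b)"
    using B(2) real_vector.span_finite[OF B(1)] by blast
  define m where "m = (\<Sum>b\<in>B. of_int \<lfloor>c b / N\<rfloor> *\<^sub>R b)"
  have m: "m \<in> lattice G"
    unfolding m_def using lattice_int_combination[OF sg B(1) B(3)] .
  have rem: "l - of_nat N *\<^sub>R m = (\<Sum>b\<in>B. (N * frac (c b / N)) *\<^sub>R b)"
    using N by (simp add: c m_def frac_def scaleR_sum_right sum_subtractf[symmetric]
        algebra_simps)
  have "norm (l - of_nat N *\<^sub>R m) \<le> (\<Sum>b\<in>B. norm ((N * frac (c b / N)) *\<^sub>R b))"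
    unfolding rem by (rule norm_sum)
  also have "\<dots> \<le> (\<Sum>b\<in>B. N * norm b)"
  proof (intro sum_mono)
    fix b
    have "N * frac (c b / N) \<le> N"
      using frac_lt_1[of "c b / N"] by (simp add: mult_left_le)
    then show "norm ((N * frac (c b / N)) *\<^sub>R b) \<le> N * norm b"
      by (simp add: mult_right_mono)
  qed
  finally have "norm (l - of_nat N *\<^sub>R m) \<le> N * (\<Sum>b\<in>B. norm b)"
    by (simp add: sum_distrib_left)
  moreover have "l - of_nat N *\<^sub>R m \<in> lattice G"
    using lattice_diff[OF sg l lattice_int_scaleR[OF sg m, of N]] by simp
  ultimately show ?thesis
    using that m by simp
qed

text \<open>Uniqueness of the representatives injects C into any finite set meeting every coset.\<close>
lemma reps_finite_if_finite_transversal: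
  assumes H: "esubgroup H" and reps: "reps G H C" and GE: "G \<subseteq> Eucl"
    and F: "finite F" "F \<subseteq> Eucl" and cover: "\<And>g. g \<in> G \<Longrightarrow> \<exists>f\<in>F. emul (einv f) g \<in> H"
  shows "finite C"
proof -
  have CG: "C \<subseteq> G" and uniq: "\<And>g. g \<in> G \<Longrightarrow> \<exists>!c. c \<in> C \<and> emul (einv c) g \<in> H"
    using reps by (auto simp: reps_def)
  define \<phi> where "\<phi> c = (SOME f. f \<in> F \<and> emul (einv f) c \<in> H)" for c
  have \<phi>: "\<phi> c \<in> F" "emul (einv (\<phi> c)) c \<in> H" if "c \<in> C" for c
    using someI_ex[of "\<lambda>f. f \<in> F \<and> emul (einv f) c \<in> H"] cover[of c] that CG
    unfolding \<phi>_def by blast+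
  have "inj_on \<phi> C"
  proof
    fix c1 c2 assume c: "c1 \<in> C" "c2 \<in> C" "\<phi> c1 = \<phi> c2"
    define f where "f = \<phi> c1"
    have fE: "f \<in> Eucl" "einv f \<in> Eucl"
      using \<phi>(1)[OF c(1)] F(2) einv_Eucl unfolding f_def by blast+
    have "emul (einv (emul (einv f) c2)) (emul (einv f) c1) \<in> H"
      using H \<phi>(2)[OF c(1)] \<phi>(2)[OF c(2)] c(3) unfolding f_def
      by (simp add: esubgroup_emul esubgroup_einv)
    also have "emul (einv (emul (einv f) c2)) (emul (einv f) c1) = emul (einv c2) c1"
      using fE by (simp add: einv_emul einv_einv emul_assoc einv_right flip: emul_assoc[of f])
    finally have "emul (einv c2) c1 \<in> H" .
    moreover have "emul (einv c1) c1 \<in> H"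
      using c(1) CG GE H by (auto simp: einv_left esubgroup_eid)
    ultimately show "c1 = c2"
      using uniq[of c1] c CG by blast
  qed
  moreover have "\<phi> ` C \<subseteq> F"
    using \<phi> by blast
  ultimately show ?thesis
    using F(1) finite_subset finite_imageD by metis
qed

lemma space_group_finite_reps:
  fixes G :: "'d::finite eucl set"
  assumes sgr: "space_group G" and adm: "admissible G N" and reps: "reps G (transl_pow G N) C"
  shows "finite C"
proof -
  have sg: "esubgroup G"
    using sgr by (simp add: space_group_def)
  have H: "esubgroup (transl_pow G N)" and N: "N \<ge> 1"
    using adm by (auto simp: admissible_def enormal_def)
  obtain B where B: "finite B" "span B = UNIV" "B \<subseteq> lattice G"
    using space_group_lattice_basis[OF sgr] by blast
  define \<rho> where "\<rho> = of_nat N * (\<Sum>b\<in>B. norm b)"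
  define rep where "rep A = (SOME g. g \<in> G \<and> rot g = A)" for A
  have rep: "rep (rot g) \<in> G" "rot (rep (rot g)) = rot g" if "g \<in> G" for g
    using someI[of "\<lambda>k. k \<in> G \<and> rot k = rot g" g] that unfolding rep_def by blast+
  define F where "F = (\<lambda>(A, r). emul (rep A) (mat 1, r)) ` (rot ` G \<times> (lattice G \<inter> cball 0 \<rho>))"
  have "finite F"
    unfolding F_def
    using space_group_finite_point_group[OF sgr] space_group_finite_lattice_cball[OF sgr] by simp
  moreover have "F \<subseteq> Eucl"
    using sg rep by (auto simp: F_def lattice_def esubgroup_emul esubgroup_Eucl)
  moreover have "\<exists>f\<in>F. emul (einv f) g \<in> transl_pow G N" if g: "g \<in> G" for g
  proof -
    define k where "k = rep (rot g)"
    have k: "k \<in> G" "k \<in> Eucl" "rot k = rot g"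
      using rep[OF g] sg esubgroup_Eucl unfolding k_def by blast+
    define l where "l = snd (emul (einv k) g)"
    have kl: "emul (einv k) g = (mat 1, l)"
      using k(3) esubgroup_orthogonal_rot[OF sg g]
      by (simp add: l_def emul_def einv_def rot_def orthogonal_matrix_def prod_eq_iff)
    have "l \<in> lattice G"
      using kl esubgroup_emul[OF sg esubgroup_einv[OF sg k(1)] g] by (simp add: lattice_def)
    then obtain m where m: "m \<in> lattice G" "l - of_nat N *\<^sub>R m \<in> lattice G \<inter> cball 0 \<rho>"
      using lattice_mod_multiple[OF sg B N] unfolding \<rho>_def by blast
    define f where "f = emul k (mat 1, l - of_nat N *\<^sub>R m)"
    have "f \<in> F"
      unfolding F_def f_def k_def using m(2) g by force
    moreover have "emul (einv f) g = (mat 1, of_nat N *\<^sub>R m)"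
      using k(2) kl
      by (simp add: f_def einv_emul emul_assoc einv_translation emul_translations)
    ultimately show ?thesis
      using m(1) by (auto simp: transl_pow_eq)
  qed
  ultimately show ?thesis
    using reps_finite_if_finite_transversal[OF H reps] sg esubgroup_Eucl by blast
qed

section \<open>Least-squares fits\<close>

lemma subspace_homogeneous_bounded_below:
  fixes N :: "'e::euclidean_space \<Rightarrow> real"
  assumes P: "subspace P" and cont: "continuous_on UNIV N"
    and hom: "\<And>c q. N (c *\<^sub>R q) = \<bar>c\<bar> * N q"
    and pos: "\<And>q. q \<in> P \<Longrightarrow> q \<noteq> 0 \<Longrightarrow> N q > 0"
  obtains c where "c > 0" "\<And>q. q \<in> P \<Longrightarrow> c * norm q \<le> N q"
proof -
  have unit: "q /\<^sub>R norm q \<in> P \<inter> sphere 0 1" if "q \<in> P" "q \<noteq> 0" for q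
    using that P by (simp add: subspace_scale)
  have "compact (N ` (P \<inter> sphere 0 1))"
    using closed_subspace[OF P] compact_sphere
    by (intro compact_continuous_image continuous_on_subset[OF cont]) (auto simp: Int_commute compact_Int_closed)
  moreover have "0 \<notin> N ` (P \<inter> sphere 0 1)"
    using pos by fastforce
  ultimately obtain c where c: "c > 0" "\<And>y. y \<in> N ` (P \<inter> sphere 0 1) \<Longrightarrow> c \<le> dist 0 y"
    using separate_point_closed compact_imp_closed by metis
  have "c * norm q \<le> N q" if q: "q \<in> P" for q
  proof (cases "q = 0")
    case True
    then show ?thesis
      using hom[of 0 0] by simp
  next
    case False
    have u: "q /\<^sub>R norm q \<in> P \<inter> sphere 0 1"
      using unit[OF q False] .
    then have "N (q /\<^sub>R norm q) > 0"
      using pos by force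
    then have "c \<le> N (q /\<^sub>R norm q)"
      using c(2)[of "N (q /\<^sub>R norm q)"] u by (simp add: dist_real_def)
    also have "\<dots> = N q / norm q"
      by (simp add: hom divide_inverse_commute)
    finally show ?thesis
      using False by (simp add: field_simps)
  qed
  then show ?thesis
    using that c(1) by blast
qed

lemma linear_family_kernel_complement:
  fixes L :: "'e::euclidean_space \<Rightarrow> 'a \<Rightarrow> 'b::real_vector"
  assumes lin: "\<And>h. linear (\<lambda>p. L p h)"
  obtains P where "subspace P" "\<And>p. \<exists>q\<in>P. \<forall>h\<in>R. L q h = L p h"
    "\<And>q. q \<in> P \<Longrightarrow> \<forall>h\<in>R. L q h = 0 \<Longrightarrow> q = 0"
proof -
  define K where "K = {p. \<forall>h\<in>R. L p h = 0}"
  define P where "P = {q. \<forall>k\<in>K. q \<bullet> k = 0}"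
  have K: "subspace K"
    unfolding K_def subspace_def by (auto simp: linear_add[OF lin] linear_0[OF lin] linear_scale[OF lin])
  have "subspace P"
    unfolding P_def subspace_def by (auto simp: inner_add_left)
  moreover have "\<exists>q\<in>P. \<forall>h\<in>R. L q h = L p h" for p
  proof -
    obtain y z where y: "y \<in> span K" and z: "\<And>v. v \<in> span K \<Longrightarrow> orthogonal z v"
      and p: "p = y + z"
      using orthogonal_subspace_decomp_exists[of K p] by blast
    have "y \<in> K"
      using y K span_eq_iff by blast
    then have "\<forall>h\<in>R. L z h = L p h"
      using p linear_add[OF lin, of y z] by (simp add: K_def)
    moreover have "z \<in> P"
      using z span_base unfolding P_def orthogonal_def by blast
    ultimately show ?thesis
      by blast
  qed
  moreover have "q = 0" if "q \<in> P" "\<forall>h\<in>R. L q h = 0" for q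
    using that by (auto simp: P_def K_def)
  ultimately show ?thesis
    using that by blast
qed

lemma continuous_attains_inf_coercive:
  fixes D :: "'e::euclidean_space \<Rightarrow> real"
  assumes P: "closed P" "a \<in> P" and cont: "continuous_on P D"
    and coercive: "\<And>q. q \<in> P \<Longrightarrow> r < norm q \<Longrightarrow> D a \<le> D q"
  obtains p where "p \<in> P" "\<And>q. q \<in> P \<Longrightarrow> D p \<le> D q"
proof -
  define B where "B = P \<inter> cball 0 (max r (norm a))"
  have "a \<in> B"
    using P(2) by (simp add: B_def)
  moreover have "compact B"
    using P(1) by (metis B_def Int_commute compact_Int_closed compact_cball)
  ultimately obtain p where p: "p \<in> B" "\<And>q. q \<in> B \<Longrightarrow> D p \<le> D q"
    using continuous_attains_inf[of B D] continuous_on_subset[OF cont] by (metis B_def empty_iff inf_le1)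
  have "D p \<le> D q" if "q \<in> P" for q
  proof (cases "norm q \<le> max r (norm a)")
    case True
    then show ?thesis
      using p(2) that by (simp add: B_def)
  next
    case False
    then show ?thesis
      using p(2)[OF \<open>a \<in> B\<close>] coercive[OF that] max.cobounded1[of r "norm a"] by linarith
  qed
  then show ?thesis
    using that p(1) B_def by blast
qed

text \<open>After restricting the parameter to the orthogonal complement of the kernel, the fitting
  error is coercive.\<close>
lemma linear_fit_attains_min:
  fixes L :: "'e::euclidean_space \<Rightarrow> 'a \<Rightarrow> 'b::real_normed_vector"
  assumes fin: "finite R" and lin: "\<And>h. linear (\<lambda>p. L p h)"
  obtains p where "\<And>q. L2_set (\<lambda>h. norm (w h - L p h)) R \<le> L2_set (\<lambda>h. norm (w h - L q h)) R"
proof -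
  define D where "D p = L2_set (\<lambda>h. norm (w h - L p h)) R" for p
  define N where "N p = L2_set (\<lambda>h. norm (L p h)) R" for p
  obtain P where P: "subspace P" and proj: "\<And>p. \<exists>q\<in>P. \<forall>h\<in>R. L q h = L p h"
    and inj: "\<And>q. q \<in> P \<Longrightarrow> \<forall>h\<in>R. L q h = 0 \<Longrightarrow> q = 0"
    by (rule linear_family_kernel_complement[of L R, OF lin]) blast
  have cont: "continuous_on UNIV (\<lambda>p. L p h)" for h
    using lin[of h] linear_continuous_on linear_conv_bounded_linear by blast
  have contD: "continuous_on UNIV D" and contN: "continuous_on UNIV N"
    unfolding D_def N_def L2_set_def by (intro continuous_intros cont)+
  have N_hom: "N (a *\<^sub>R q) = \<bar>a\<bar> * N q" for a q
    using L2_set_right_distrib[of "\<bar>a\<bar>" "\<lambda>h. norm (L q h)" R]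
    by (simp add: N_def linear_scale[OF lin])
  have N_pos: "N q > 0" if "q \<in> P" "q \<noteq> 0" for q
    using inj[OF that(1)] that(2) fin by (auto simp: N_def L2_set_eq_0_iff less_le)
  obtain c where c: "c > 0" "\<And>q. q \<in> P \<Longrightarrow> c * norm q \<le> N q"
    using subspace_homogeneous_bounded_below[OF P contN N_hom N_pos] by blast
  have N_triangle: "N q \<le> D q + D 0" for q
  proof -
    have "N q \<le> L2_set (\<lambda>h. norm (L q h - w h) + norm (w h)) R"
      unfolding N_def by (rule L2_set_mono) (auto intro: order_trans[OF _ norm_triangle_ineq])
    also have "\<dots> \<le> L2_set (\<lambda>h. norm (L q h - w h)) R + L2_set (\<lambda>h. norm (w h)) R"
      by (rule L2_set_triangle_ineq)
    finally show ?thesis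
      by (simp add: D_def linear_0[OF lin] norm_minus_commute)
  qed
  have "D 0 \<le> D q" if "q \<in> P" "2 * D 0 / c < norm q" for q
  proof -
    have "2 * D 0 < c * norm q"
      using that(2) c(1) by (simp add: field_simps)
    then show ?thesis
      using c(2)[OF that(1)] N_triangle[of q] by linarith
  qed
  then obtain p where p: "\<And>q. q \<in> P \<Longrightarrow> D p \<le> D q"
    using continuous_attains_inf_coercive[OF closed_subspace[OF P] subspace_0[OF P]
        continuous_on_subset[OF contD]] by blast
  have "D p \<le> D q" for q
  proof -
    obtain q' where "q' \<in> P" "\<forall>h\<in>R. L q' h = L q h"
      using proj by blast
    then show ?thesis
      using p[of q'] unfolding D_def by (metis (no_types, lifting) L2_set_cong)
  qed
  then show ?thesis
    using that unfolding D_def by blast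
qed

section \<open>Infinitesimal isometries\<close>

lemma isodist_Uiso: "v \<in> Uiso x0 R \<Longrightarrow> isodist x0 R v = 0"
  unfolding isodist_def by (rule cInf_eq_minimum) (auto intro!: exI[of _ v] sum_nonneg)

lemma Uiso_cong: "(\<And>h. h \<in> R \<Longrightarrow> v h = w h) \<Longrightarrow> v \<in> Uiso x0 R \<longleftrightarrow> w \<in> Uiso x0 R"
  by (simp add: Uiso_def)

text \<open>Writing the skew matrix as M - transpose M turns U_iso(R) into the image of a linear
  parametrisation by pairs (a, M).\<close>
definition iso_param :: "real^'d::finite \<Rightarrow> (real^'d) \<times> (real^'d^'d) \<Rightarrow> 'd eucl \<Rightarrow> real^'d"
  where "iso_param x0 p h =
    transpose (rot h) *v (fst p + (snd p - transpose (snd p)) *v (act h x0 - x0))"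

lemma linear_iso_param: "linear (\<lambda>p. iso_param x0 p h)"
  by (rule linearI) (simp_all add: iso_param_def transpose_add transpose_scalar algebra_simps
      scaleR_matrix_vector_assoc[symmetric])

lemma iso_param_Uiso:
  assumes "R \<subseteq> Eucl"
  shows "iso_param x0 p \<in> Uiso x0 R"
proof -
  have "rot h *v iso_param x0 p h = fst p + (snd p - transpose (snd p)) *v (act h x0 - x0)"
    if "h \<in> R" for h
    using that assms Eucl_iff_orthogonal_rot orthogonal_matrix_mult_transpose_cancel
    unfolding iso_param_def by blast
  moreover have "skew (snd p - transpose (snd p))"
    by (simp add: skew_def transpose_diff)
  ultimately show ?thesis
    unfolding Uiso_def by blast
qed

lemma Uiso_imp_iso_param:
  assumes RE: "R \<subseteq> Eucl" and v: "v \<in> Uiso x0 R"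
  obtains p where "\<And>h. h \<in> R \<Longrightarrow> v h = iso_param x0 p h"
proof -
  obtain a S where S: "skew S" and v: "\<forall>h\<in>R. rot h *v v h = a + S *v (act h x0 - x0)"
    using v unfolding Uiso_def by blast
  have half: "(1/2) *\<^sub>R S - transpose ((1/2) *\<^sub>R S) = S"
    using S by (simp add: skew_def transpose_scalar algebra_simps flip: scaleR_2 scaleR_add_right)
  have "v h = iso_param x0 (a, (1/2) *\<^sub>R S) h" if h: "h \<in> R" for h
  proof -
    have "orthogonal_matrix (rot h)"
      using RE h Eucl_iff_orthogonal_rot by blast
    then show ?thesis
      using v h orthogonal_matrix_transpose_mult_cancel[of "rot h" "v h"]
      by (simp add: iso_param_def half del: transpose_matrix_vector)
  qed
  then show ?thesis
    using that by blast
qed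

lemma isodist_zero_imp_Uiso:
  fixes x0 :: "real^'d::finite"
  assumes fin: "finite R" and RE: "R \<subseteq> Eucl" and zero: "isodist x0 R w = 0"
  shows "w \<in> Uiso x0 R"
proof -
  define D where "D v = L2_set (\<lambda>h. norm (w h - v h)) R" for v
  obtain p where p: "\<And>q. D (iso_param x0 p) \<le> D (iso_param x0 q)"
    unfolding D_def by (rule linear_fit_attains_min[of R "iso_param x0" w, OF fin linear_iso_param]) blast
  have "D (iso_param x0 p) \<le> Inf {D v |v. v \<in> Uiso x0 R}"
  proof (rule cInf_greatest)
    show "{D v |v. v \<in> Uiso x0 R} \<noteq> {}"
      using iso_param_Uiso[OF RE] by blast
    fix y assume "y \<in> {D v |v. v \<in> Uiso x0 R}"
    then obtain v q where "y = D v" "\<And>h. h \<in> R \<Longrightarrow> v h = iso_param x0 q h"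
      using Uiso_imp_iso_param[OF RE] by blast
    then have "y = D (iso_param x0 q)"
      unfolding D_def by (auto intro: L2_set_cong)
    then show "D (iso_param x0 p) \<le> y"
      using p by simp
  qed
  also have "\<dots> = 0"
    using zero by (simp add: isodist_def D_def L2_set_def)
  finally have "D (iso_param x0 p) = 0"
    by (simp add: D_def antisym)
  then have "\<And>h. h \<in> R \<Longrightarrow> w h = iso_param x0 p h"
    using fin by (simp add: D_def L2_set_eq_0_iff)
  then show ?thesis
    using iso_param_Uiso[OF RE] Uiso_cong by blast
qed

lemma Rnorm_eq_0_iff:
  assumes "finite C" "C \<noteq> {}"
  shows "Rnorm x0 C R u = 0 \<longleftrightarrow> (\<forall>c\<in>C. isodist x0 R (\<lambda>h. u (emul c h)) = 0)"
  using assms by (simp add: Rnorm_def sum_nonneg_eq_0_iff)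

section \<open>Affine fields\<close>

lemma affine_maps_eq_if_affine_hull_UNIV:
  fixes T1 T2 :: "real^'n^'m"
  assumes hull: "affine hull S = UNIV" and eq: "\<And>y. y \<in> S \<Longrightarrow> b1 + T1 *v y = b2 + T2 *v y"
  shows "b1 = b2 \<and> T1 = T2"
proof -
  have combination: "b + T *v (s *\<^sub>R x + t *\<^sub>R y) = s *\<^sub>R (b + T *v x) + t *\<^sub>R (b + T *v y)"
    if "s + t = 1" for b :: "real^'m" and T :: "real^'n^'m" and x y s t
  proof -
    have "b = s *\<^sub>R b + t *\<^sub>R b"
      using that by (metis scaleR_add_left scaleR_one)
    then show ?thesis
      by (simp add: matrix_vector_right_distrib matrix_vector_mult_scaleR algebra_simps)
  qed
  define Z where "Z = {y. b1 + T1 *v y = b2 + T2 *v y}"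
  have "affine Z"
    unfolding affine_def Z_def by (simp add: combination)
  then have "affine hull S \<subseteq> Z"
    using eq by (intro hull_minimal) (auto simp: Z_def)
  then have Z: "b1 + T1 *v y = b2 + T2 *v y" for y
    using hull by (auto simp: Z_def)
  then have "b1 = b2"
    using Z[of 0] by simp
  moreover have "T1 *v y = T2 *v y" for y
    using Z[of y] \<open>b1 = b2\<close> by simp
  ultimately show ?thesis
    by (simp add: matrix_eq)
qed

lemma affine_hull_act_image: "affine hull (act g ` S) = act g ` (affine hull S)"
proof -
  have act: "act g ` X = (\<lambda>y. snd g + y) ` (*v) (fst g) ` X" for X
    by (auto simp: act_def image_image add.commute)
  show ?thesis
    unfolding act affine_hull_translation by (simp add: affine_hull_linear_image)
qed

lemma affine_hull_orbit_emul_UNIV: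
  assumes g: "g \<in> Eucl" and hull: "affine hull ((\<lambda>h. act h x0) ` S) = UNIV"
  shows "affine hull ((\<lambda>k. act k x0) ` emul g ` S) = UNIV"
proof -
  have "(\<lambda>k. act k x0) ` emul g ` S = act g ` (\<lambda>h. act h x0) ` S"
    by (simp add: image_image act_emul)
  then show ?thesis
    using hull surj_act[OF g] by (simp add: affine_hull_act_image)
qed

lemma space_group_orbit_affine_hull:
  assumes sgr: "space_group G"
  shows "affine hull ((\<lambda>g. act g x0) ` G) = UNIV"
proof -
  have sg: "esubgroup G"
    using sgr by (simp add: space_group_def)
  obtain B where B: "finite B" "span B = UNIV" "B \<subseteq> lattice G"
    using space_group_lattice_basis[OF sgr] by blast
  define A where "A = affine hull ((\<lambda>g. act g x0) ` G)"
  have orbit: "act g x0 \<in> A" if "g \<in> G" for g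
    using that hull_subset[of "(\<lambda>g. act g x0) ` G"] unfolding A_def by blast
  have x0: "x0 \<in> A"
    using orbit[OF esubgroup_eid[OF sg]] by simp
  have "affine A"
    unfolding A_def by (rule affine_affine_hull)
  then have "subspace ((\<lambda>x. - x0 + x) ` A)"
    using x0 by (rule affine_diffs_subspace)
  moreover have "B \<subseteq> (\<lambda>x. - x0 + x) ` A"
  proof
    fix b assume "b \<in> B"
    then have "act (mat 1, b) x0 \<in> A"
      using B(3) orbit unfolding lattice_def by blast
    then show "b \<in> (\<lambda>x. - x0 + x) ` A"
      by (intro image_eqI[of _ _ "x0 + b"]) (auto simp: act_def)
  qed
  ultimately have "span B \<subseteq> (\<lambda>x. - x0 + x) ` A"
    by (intro span_minimal)
  then have onto: "UNIV \<subseteq> (\<lambda>x. - x0 + x) ` A"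
    using B(2) by simp
  have "y \<in> A" for y
  proof -
    obtain a where "a \<in> A" "- x0 + y = - x0 + a"
      using onto by blast
    then show ?thesis
      by simp
  qed
  then show ?thesis
    unfolding A_def by blast
qed

text \<open>A local infinitesimal isometry at g (an element of U_iso(R) for u(g \<cdot>)), rewritten in
  global coordinates, is an affine field on g R.\<close>
definition affine_field_on ::
  "real^'d::finite \<Rightarrow> ('d eucl \<Rightarrow> real^'d) \<Rightarrow> 'd eucl set \<Rightarrow> (real^'d) \<times> (real^'d^'d) \<Rightarrow> bool"
  where "affine_field_on x0 u K p \<longleftrightarrow> (\<forall>k\<in>K. rot k *v u k = fst p + snd p *v act k x0)"

lemma Uiso_imp_affine_field_on:
  assumes g: "g \<in> Eucl" and iso: "(\<lambda>h. u (emul g h)) \<in> Uiso x0 R"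
  shows "\<exists>p. affine_field_on x0 u (emul g ` R) p"
proof -
  obtain a S where S: "\<forall>h\<in>R. rot h *v u (emul g h) = a + S *v (act h x0 - x0)"
    using iso unfolding Uiso_def by blast
  define T where "T = rot g ** S ** transpose (rot g)"
  have orth: "orthogonal_matrix (rot g)"
    using g Eucl_iff_orthogonal_rot by blast
  have T: "rot g *v (S *v y) = T *v (rot g *v y)" for y
    using orthogonal_matrix_transpose_mult_cancel[OF orth, of y]
    by (simp add: T_def matrix_vector_mul_assoc[symmetric] del: transpose_matrix_vector)
  have "rot (emul g h) *v u (emul g h) = (rot g *v a - T *v act g x0) + T *v act (emul g h) x0"
    if "h \<in> R" for h
  proof -
    have "rot (emul g h) *v u (emul g h) = rot g *v (a + S *v (act h x0 - x0))"
      using S that by (simp add: rot_emul matrix_vector_mul_assoc[symmetric])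
    also have "\<dots> = rot g *v a + T *v (rot g *v (act h x0 - x0))"
      by (simp add: matrix_vector_right_distrib T)
    also have "rot g *v (act h x0 - x0) = act (emul g h) x0 - act g x0"
      unfolding act_emul by (simp add: act_def rot_def matrix_vector_mult_diff_distrib)
    finally show ?thesis
      by (simp add: matrix_vector_mult_diff_distrib)
  qed
  then show ?thesis
    unfolding affine_field_on_def by (intro exI[of _ "(rot g *v a - T *v act g x0, T)"]) auto
qed

lemma affine_field_on_mono:
  "K' \<subseteq> K \<Longrightarrow> affine_field_on x0 u K p \<Longrightarrow> affine_field_on x0 u K' p"
  by (auto simp: affine_field_on_def)

lemma affine_field_on_unique:
  assumes "affine_field_on x0 u K p" "affine_field_on x0 u K q"
    and "affine hull ((\<lambda>k. act k x0) ` K) = UNIV"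
  shows "p = q"
proof -
  have "fst p + snd p *v y = fst q + snd q *v y" if y: "y \<in> (\<lambda>k. act k x0) ` K" for y
  proof -
    obtain k where "k \<in> K" "y = act k x0"
      using y by blast
    then show ?thesis
      using assms(1,2) unfolding affine_field_on_def by metis
  qed
  from affine_maps_eq_if_affine_hull_UNIV[OF assms(3) this] show ?thesis
    by (simp add: prod_eq_iff)
qed

text \<open>Two overlapping translates g R and g r R (r a generator) share g r R'', whose orbit
  has full affine hull; hence their affine fields coincide, and along the generators the
  field propagates to all of G.\<close>
lemma affine_field_on_generated:
  assumes sg: "esubgroup G" and gen: "egen R' = G"
    and eid: "eid \<in> R'" "eid \<in> R''"
    and hull: "affine hull ((\<lambda>h. act h x0) ` R'') = UNIV"
    and prod: "{emul r h | r h. r \<in> R' \<and> h \<in> R''} \<subseteq> R"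
    and local: "\<And>g. g \<in> G \<Longrightarrow> \<exists>p. affine_field_on x0 u (emul g ` R) p"
  shows "\<exists>p. affine_field_on x0 u G p"
proof -
  have R'G: "R' \<subseteq> G"
    using generators_subset_egen gen by blast
  have prodR: "emul r h \<in> R" if "r \<in> R'" "h \<in> R''" for r h
    using prod that by blast
  define p where "p g = (SOME p. affine_field_on x0 u (emul g ` R) p)" for g
  have p: "affine_field_on x0 u (emul g ` R) (p g)" if "g \<in> G" for g
    using someI_ex[OF local[OF that]] unfolding p_def .
  have "p (emul g r) = p g" if g: "g \<in> G" and r: "r \<in> R'" for g r
  proof (rule affine_field_on_unique)
    have gr: "emul g r \<in> G"
      using sg g r R'G by (auto intro: esubgroup_emul)
    show "affine hull ((\<lambda>k. act k x0) ` emul (emul g r) ` R'') = UNIV"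
      using affine_hull_orbit_emul_UNIV[OF esubgroup_Eucl[OF sg gr] hull] .
    have "emul (emul g r) ` R'' \<subseteq> emul (emul g r) ` R"
      using prodR[OF eid(1)] by auto
    then show "affine_field_on x0 u (emul (emul g r) ` R'') (p (emul g r))"
      using p[OF gr] by (rule affine_field_on_mono)
    have "emul (emul g r) ` R'' \<subseteq> emul g ` R"
      using prodR[OF r] by (auto simp: emul_assoc)
    then show "affine_field_on x0 u (emul (emul g r) ` R'') (p g)"
      using p[OF g] by (rule affine_field_on_mono)
  qed
  then have const: "p g = p eid" if "g \<in> G" for g
    using right_invariant_on_generators_imp_const[OF sg gen, of p g] that by blast
  have "g \<in> emul g ` R" for g
    using prodR[OF eid] by (intro image_eqI[of _ _ eid]) auto
  then have "affine_field_on x0 u G (p eid)"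
    using p const unfolding affine_field_on_def by metis
  then show ?thesis ..
qed

section \<open>The kernel of the seminorm\<close>

lemma periodic_emul_normal:
  assumes sg: "esubgroup G" and per: "periodic G N u" and nor: "enormal (transl_pow G N) G"
    and g: "g \<in> G" and h: "h \<in> G" and t: "t \<in> transl_pow G N"
  shows "u (emul (emul g t) h) = u (emul g h)"
proof -
  have hE: "h \<in> Eucl"
    using esubgroup_Eucl[OF sg h] .
  define t' where "t' = emul (emul (einv h) t) h"
  have "t' \<in> transl_pow G N"
    using nor esubgroup_einv[OF sg h] t einv_einv[OF hE] unfolding enormal_def t'_def by metis
  moreover have "emul h t' = emul t h"
    using einv_right[OF hE] by (simp add: t'_def emul_assoc[symmetric])
  then have "u (emul (emul g t) h) = u (emul (emul g h) t')"
    by (simp add: emul_assoc)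
  ultimately show ?thesis
    using per esubgroup_emul[OF sg g h] by (simp add: periodic_def)
qed

text \<open>Comparing the field at a translation t in T^N with its value at the identity, which
  agree by periodicity, kills the linear part on a lattice basis.\<close>
lemma affine_field_periodic_imp_Utrans:
  fixes G :: "'d::finite eucl set"
  assumes sgr: "space_group G" and adm: "admissible G N" and per: "periodic G N u"
    and field: "affine_field_on x0 u G p"
  shows "u \<in> Utrans G"
proof -
  have sg: "esubgroup G"
    using sgr by (simp add: space_group_def)
  have N: "N \<ge> 1"
    using adm by (simp add: admissible_def)
  have HG: "transl_pow G N \<subseteq> G"
    using transl_pow_subset[OF sg] .
  obtain B where B: "finite B" "span B = UNIV" "B \<subseteq> lattice G"
    using space_group_lattice_basis[OF sgr] by blast
  have "snd p *v c = 0" if c: "c \<in> B" for c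
  proof -
    define t where "t = (mat 1 :: real^'d^'d, of_nat N *\<^sub>R c)"
    have tH: "t \<in> transl_pow G N"
      using c B(3) by (auto simp: t_def transl_pow_eq)
    then have "u t = u eid"
      using per esubgroup_eid[OF sg] unfolding periodic_def by (metis emul_eid_left)
    moreover have "rot t *v u t = fst p + snd p *v act t x0"
      using field HG tH unfolding affine_field_on_def by blast
    then have "u t = fst p + snd p *v (x0 + of_nat N *\<^sub>R c)"
      by (simp add: t_def rot_def act_def add.commute)
    moreover have "u eid = fst p + snd p *v x0"
      using field esubgroup_eid[OF sg] unfolding affine_field_on_def by auto
    ultimately have "of_nat N *\<^sub>R (snd p *v c) = 0"
      by (simp add: matrix_vector_right_distrib matrix_vector_mult_scaleR)
    then show ?thesis
      using N by simp
  qed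
  then have "snd p = 0"
    using matrix_eq_on_spanning_set[OF B(2), of "snd p" 0] by simp
  then have "\<forall>g\<in>G. rot g *v u g = fst p"
    using field unfolding affine_field_on_def by simp
  then show ?thesis
    unfolding Utrans_def by blast
qed

lemma Rnorm_eq_0_imp_Utrans:
  assumes sgr: "space_group G" and adm: "admissible G N" and reps: "reps G (transl_pow G N) C"
    and RG: "R \<subseteq> G" and p2: "property2 x0 G R" and per: "periodic G N u"
    and zero: "Rnorm x0 C R u = 0"
  shows "u \<in> Utrans G"
proof -
  have sg: "esubgroup G"
    using sgr by (simp add: space_group_def)
  have nor: "enormal (transl_pow G N) G"
    using adm by (simp add: admissible_def)
  have CG: "C \<subseteq> G" and coset: "\<And>g. g \<in> G \<Longrightarrow> \<exists>c\<in>C. emul (einv c) g \<in> transl_pow G N"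
    using reps unfolding reps_def by blast+
  have "finite C" "C \<noteq> {}"
    using space_group_finite_reps[OF sgr adm reps] coset[OF esubgroup_eid[OF sg]] by blast+
  then have isodist_C: "isodist x0 R (\<lambda>h. u (emul c h)) = 0" if "c \<in> C" for c
    using Rnorm_eq_0_iff zero that by blast
  have "finite R" "R \<subseteq> Eucl"
    using p2 RG esubgroup_Eucl[OF sg] by (auto simp: property2_def)
  then have iso_C: "(\<lambda>h. u (emul c h)) \<in> Uiso x0 R" if "c \<in> C" for c
    using isodist_zero_imp_Uiso isodist_C[OF that] by blast
  have iso_G: "(\<lambda>h. u (emul g h)) \<in> Uiso x0 R" if g: "g \<in> G" for g
  proof -
    obtain c where c: "c \<in> C" and t: "emul (einv c) g \<in> transl_pow G N"
      using coset[OF g] by blast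
    have cG: "c \<in> G"
      using c CG by blast
    have "g = emul c (emul (einv c) g)"
      using einv_right[OF esubgroup_Eucl[OF sg cG]] by (simp add: emul_assoc[symmetric])
    then have "u (emul g h) = u (emul c h)" if "h \<in> R" for h
      using periodic_emul_normal[OF sg per nor cG _ t, of h] that RG by auto
    then have "(\<lambda>h. u (emul g h)) \<in> Uiso x0 R \<longleftrightarrow> (\<lambda>h. u (emul c h)) \<in> Uiso x0 R"
      by (rule Uiso_cong)
    with iso_C[OF c] show ?thesis
      by simp
  qed
  obtain R' R'' where gen: "egen R' = G" and eid': "eid \<in> R'"
    and p1: "property1 x0 G R''" and prod: "{emul g h | g h. g \<in> R' \<and> h \<in> R''} \<subseteq> R"
    using p2 unfolding property2_def by blast
  have eid'': "eid \<in> R''" and hull: "affine hull ((\<lambda>h. act h x0) ` R'') = UNIV"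
    using p1 space_group_orbit_affine_hull[OF sgr] by (simp_all add: property1_def)
  have local: "\<exists>p. affine_field_on x0 u (emul g ` R) p" if "g \<in> G" for g
    using Uiso_imp_affine_field_on[OF esubgroup_Eucl[OF sg that] iso_G[OF that]] .
  have "\<exists>p. affine_field_on x0 u G p"
    using affine_field_on_generated[OF sg gen eid' eid'' hull prod local] .
  then show ?thesis
    using affine_field_periodic_imp_Utrans[OF sgr adm per] by blast
qed

lemma Utrans_imp_periodic:
  assumes sg: "esubgroup G" and u: "u \<in> Utrans G"
  shows "periodic G N u"
  unfolding periodic_def
proof (intro ballI)
  fix g t assume g: "g \<in> G" and t: "t \<in> transl_pow G N"
  obtain a where a: "\<And>k. k \<in> G \<Longrightarrow> rot k *v u k = a"
    using u unfolding Utrans_def by blast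
  obtain b where b: "b \<in> lattice G" "t = (mat 1, of_nat N *\<^sub>R b)"
    using t by (auto simp: transl_pow_eq)
  have "emul g t \<in> G"
    using esubgroup_emul[OF sg g] transl_pow_subset[OF sg] t by blast
  then have "rot (emul g t) *v u (emul g t) = rot g *v u g"
    using a a[OF g] by simp
  moreover have "rot (emul g t) = rot g"
    using b(2) unfolding rot_emul by (simp add: rot_def)
  ultimately have "rot g *v u (emul g t) = rot g *v u g"
    by simp
  then show "u (emul g t) = u g"
    using orthogonal_matrix_transpose_mult_cancel[OF esubgroup_orthogonal_rot[OF sg g]] by metis
qed

lemma Utrans_imp_Uiso:
  assumes sg: "esubgroup G" and u: "u \<in> Utrans G" and g: "g \<in> G" and RG: "R \<subseteq> G"
  shows "(\<lambda>h. u (emul g h)) \<in> Uiso x0 R"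
proof -
  obtain a where a: "\<And>k. k \<in> G \<Longrightarrow> rot k *v u k = a"
    using u unfolding Utrans_def by blast
  have "rot h *v u (emul g h) = transpose (rot g) *v a" if h: "h \<in> R" for h
  proof -
    have "emul g h \<in> G"
      using esubgroup_emul[OF sg g] h RG by blast
    then have "rot (emul g h) *v u (emul g h) = a"
      using a by blast
    then have "rot g *v (rot h *v u (emul g h)) = a"
      by (simp add: rot_emul matrix_vector_mul_assoc)
    then show ?thesis
      using orthogonal_matrix_transpose_mult_cancel[OF esubgroup_orthogonal_rot[OF sg g]] by metis
  qed
  then show ?thesis
    unfolding Uiso_def skew_def
    by (intro CollectI exI[of _ "transpose (rot g) *v a"] exI[of _ 0]) (simp add: transpose_zero)
qed

lemma Utrans_imp_Rnorm_eq_0: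
  assumes "esubgroup G" "u \<in> Utrans G" "C \<subseteq> G" "R \<subseteq> G"
  shows "Rnorm x0 C R u = 0"
proof -
  have "isodist x0 R (\<lambda>h. u (emul c h)) = 0" if "c \<in> C" for c
    using assms(3) that by (intro isodist_Uiso Utrans_imp_Uiso[OF assms(1,2) _ assms(4)]) blast
  then show ?thesis
    by (simp add: Rnorm_def)
qed

theorem corollary3p29:
  fixes G :: "'d::finite eucl set" and x0 :: "real^'d" and R :: "'d eucl set"
    and C :: "nat \<Rightarrow> 'd eucl set"
  assumes "space_group G"
    and "inj_on (\<lambda>g. act g x0) G"
    and "\<And>N. admissible G N \<Longrightarrow> reps G (transl_pow G N) (C N)"
    and "R \<subseteq> G"
    and "property2 x0 G R"
  shows "\<forall>u. (u \<in> Utrans G \<longleftrightarrow>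
               (\<exists>N. admissible G N \<and> periodic G N u \<and> Rnorm x0 (C N) R u = 0))
           \<and> (u \<in> Utrans G \<longleftrightarrow>
               u \<in> Uper G \<and> (\<forall>N. admissible G N \<and> periodic G N u \<longrightarrow> Rnorm x0 (C N) R u = 0))"
proof -
  have sg: "esubgroup G"
    using assms(1) by (simp add: space_group_def)
  have hard: "u \<in> Utrans G"
    if "admissible G N" "periodic G N u" "Rnorm x0 (C N) R u = 0" for N u
    using Rnorm_eq_0_imp_Utrans[OF assms(1) that(1) assms(3)[OF that(1)] assms(4,5) that(2,3)] .
  have easy: "periodic G N u \<and> Rnorm x0 (C N) R u = 0"
    if "u \<in> Utrans G" "admissible G N" for N u
    using Utrans_imp_periodic[OF sg that(1)] Utrans_imp_Rnorm_eq_0[OF sg that(1) _ assms(4)]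
      assms(3)[OF that(2)] by (simp add: reps_def)
  have "u \<in> Uper G" if "u \<in> Utrans G" for u
    using easy[OF that admissible_1[OF sg]] admissible_1[OF sg] unfolding Uper_def by blast
  then show ?thesis
    using hard easy admissible_1[OF sg] unfolding Uper_def by blast
qed

end
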